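(* Let $R$ be a commutative $\mathbb{Q}$-algebra with unity, let $\Delta=(V,\mathcal{A})$ be a finite digraph (multi-arcs and multi-loops allowed), and let $\tau,\upsilon:\mathcal{A}\to R$ be arbitrary maps. Define $\theta^{\rm G}:\mathcal{A}\times\mathcal{A}\to R$ by $$\theta^{\rm G}(a,a')=\tau(a')\,\delta_{\mathfrak{h}(a)\mathfrak{t}(a')}-\upsilon(a')\,\delta_{a'\in S(a)}.$$ Then, in $R[[t]]$, $$Z_{\Delta}(t;\theta^{\rm G})^{-1}=f_{\Delta}(t)\,\det\!\left(I-tA_{\Delta}(\theta^{\rm G})+t^2D_{\Delta}(\theta^{\rm G})\right),$$ where $I$ is the identity matrix of size $|V|$ and $f_\Delta$, $A_\Delta(\theta^{\rm G})$, $D_\Delta(\theta^{\rm G})$ are as defined in the context.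
   Context: A finite digraph $\Delta=(V,\mathcal{A})$ consists of a finite vertex set $V$ and a finite multiset $\mathcal{A}$ of arcs; each arc $a$ has a tail $\mathfrak{t}(a)\in V$ and head $\mathfrak{h}(a)\in V$ (loops $\mathfrak{t}(a)=\mathfrak{h}(a)$ and parallel arcs are allowed). For $u,v\in V$ let $\mathcal{A}_{uv}=\{a\in\mathcal{A}:\mathfrak{t}(a)=u,\mathfrak{h}(a)=v\}$. For $a\in\mathcal{A}_{uv}$ put $S(a)=\mathcal{A}_{vu}$ (the set of inverse arcs of $a$; in particular every loop at $u$ is an inverse of every loop at $u$, including itself); $\delta_{a'\in S(a)}$ is $1$ if $a'\in S(a)$ and $0$ otherwise, and $\delta_{xy}$ is the Kronecker delta. Zeta function: for a map $\theta:\mathcal{A}\times\mathcal{A}\to R$ and $m\ge1$, let $N_m(\theta)=\sum \theta(a_1,a_2)\theta(a_2,a_3)\cdots\theta(a_{m-1},a_m)\theta(a_m,a_1)$, the sum running over all sequences $(a_1,\dots,a_m)\in\mathcal{A}^m$ with $\mathfrak{h}(a_i)=\mathfrak{t}(a_{i+1})$ for $1\le i\le m-1$ and $\mathfrak{h}(a_m)=\mathfrak{t}(a_1)$ (closed paths of length $m$). Then $Z_\Delta(t;\theta)=\exp\left(\sum_{m\ge1}\frac{N_m(\theta)}{m}t^m\right)\in R[[t]]$. Fix a total order $\le$ on $V$. Let $\mathcal{A}(u,v)=\mathcal{A}_{uv}\cup\mathcal{A}_{vu}$ and $\Phi_\Delta=\{(u,v)\in V\times V: u\le v,\ \mathcal{A}(u,v)\neq\emptyset\}$,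 and let $\Phi^{(3)}_\Delta=\{(u,v)\in\Phi_\Delta: u\ne v,\ \mathcal{A}_{uv}\ne\emptyset,\ \mathcal{A}_{vu}\neq\emptyset\}$. For $(u,v)\in V\times V$ define $$f_{(u,v)}(t)=\begin{cases}1+t\sum_{a\in\mathcal{A}_{uu}}\upsilon(a), & u=v,\\ 1-t^2\Big(\sum_{a\in\mathcal{A}_{uv}}\upsilon(a)\Big)\Big(\sum_{a\in\mathcal{A}_{vu}}\upsilon(a)\Big), & u\ne v,\end{cases}$$ which is invertible in $R[[t]]$, and $f_\Delta(t)=\prod_{(u,v)\in\Phi_\Delta}f_{(u,v)}(t)$. For $u,v\in V$ put $a_{uv}=\sum_{a\in\mathcal{A}_{uv}}\tau(a)$ and $d_{uv}=\sum_{a\in\mathcal{A}_{uv},\,a'\in\mathcal{A}_{vu}}\tau(a)\upsilon(a')$. Then $A_\Delta(\theta^{\rm G})$ and $D_\Delta(\theta^{\rm G})$ are the $V\times V$ matrices over $R[[t]]$ with entries $$A_\Delta(\theta^{\rm G})_{ww'}=f_{(w,w')}(t)^{-1}a_{ww'},\qquad D_\Delta(\theta^{\rm G})_{ww'}=\delta_{ww'}\sum_{(u,v)\in\Phi^{(3)}_\Delta}f_{(u,v)}(t)^{-1}\left(\delta_{wu}d_{uv}+\delta_{wv}d_{vu}\right).$$ *)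

theory Defs
  imports "HOL-Analysis.Analysis" "HOL-Computational_Algebra.Formal_Power_Series"
begin

text \<open>A finite digraph: vertex set = the finite, linearly ordered type 'v;
  arcs = a finite set A of arc labels (parallel arcs / loops = distinct labels
  with equal tail/head), with tail and head maps tail, head.\<close>

definition rinv :: "'r::comm_ring_1 \<Rightarrow> 'r" where
  "rinv x = (THE y. x * y = 1)"

definition finv :: "'r::comm_ring_1 fps \<Rightarrow> 'r fps" where
  "finv g = (THE h. g * h = 1)"

text \<open>Exponential of a power series with zero constant term, over a Q-algebra.\<close>
definition fps_exp_R :: "'r::comm_ring_1 fps \<Rightarrow> 'r fps" where
  "fps_exp_R g = Abs_fps (\<lambda>n. \<Sum>k\<le>n. rinv (of_nat (fact k)) * fps_nth (g ^ k) n)"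

definition arcs_between :: "'e set \<Rightarrow> ('e \<Rightarrow> 'v) \<Rightarrow> ('e \<Rightarrow> 'v) \<Rightarrow> 'v \<Rightarrow> 'v \<Rightarrow> 'e set" where
  "arcs_between A tail head u v = {a \<in> A. tail a = u \<and> head a = v}"

definition inv_arcs :: "'e set \<Rightarrow> ('e \<Rightarrow> 'v) \<Rightarrow> ('e \<Rightarrow> 'v) \<Rightarrow> 'e \<Rightarrow> 'e set" where
  "inv_arcs A tail head a = arcs_between A tail head (head a) (tail a)"

definition N_paths :: "'e set \<Rightarrow> ('e \<Rightarrow> 'v) \<Rightarrow> ('e \<Rightarrow> 'v) \<Rightarrow> ('e \<Rightarrow> 'e \<Rightarrow> 'r::comm_ring_1) \<Rightarrow> nat \<Rightarrow> 'r" where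
  "N_paths A tail head \<theta> m =
     (\<Sum>p \<in> {..<m} \<rightarrow>\<^sub>E A.
        if (\<forall>i<m. head (p i) = tail (p ((i + 1) mod m)))
        then (\<Prod>i<m. \<theta> (p i) (p ((i + 1) mod m))) else 0)"

definition zeta :: "'e set \<Rightarrow> ('e \<Rightarrow> 'v) \<Rightarrow> ('e \<Rightarrow> 'v) \<Rightarrow> ('e \<Rightarrow> 'e \<Rightarrow> 'r::comm_ring_1) \<Rightarrow> 'r fps" where
  "zeta A tail head \<theta> =
     fps_exp_R (Abs_fps (\<lambda>m. if m = 0 then 0 else rinv (of_nat m) * N_paths A tail head \<theta> m))"

definition thetaG :: "'e set \<Rightarrow> ('e \<Rightarrow> 'v) \<Rightarrow> ('e \<Rightarrow> 'v) \<Rightarrow> ('e \<Rightarrow> 'r::comm_ring_1) \<Rightarrow> ('e \<Rightarrow> 'r) \<Rightarrow> 'e \<Rightarrow> 'e \<Rightarrow> 'r" where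
  "thetaG A tail head \<tau> \<upsilon> a a' =
     \<tau> a' * (if head a = tail a' then 1 else 0) - \<upsilon> a' * (if a' \<in> inv_arcs A tail head a then 1 else 0)"

definition f_pair :: "'e set \<Rightarrow> ('e \<Rightarrow> 'v) \<Rightarrow> ('e \<Rightarrow> 'v) \<Rightarrow> ('e \<Rightarrow> 'r::comm_ring_1) \<Rightarrow> 'v \<Rightarrow> 'v \<Rightarrow> 'r fps" where
  "f_pair A tail head \<upsilon> u v =
     (if u = v then 1 + fps_const (\<Sum>a\<in>arcs_between A tail head u u. \<upsilon> a) * fps_X
      else 1 - fps_const ((\<Sum>a\<in>arcs_between A tail head u v. \<upsilon> a) * (\<Sum>a\<in>arcs_between A tail head v u. \<upsilon> a)) * fps_X ^ 2)"

definition Phi :: "'e set \<Rightarrow> ('e \<Rightarrow> 'v::linorder) \<Rightarrow> ('e \<Rightarrow> 'v) \<Rightarrow> ('v \<times> 'v) set" where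
  "Phi A tail head = {(u, v). u \<le> v \<and> arcs_between A tail head u v \<union> arcs_between A tail head v u \<noteq> {}}"

definition Phi3 :: "'e set \<Rightarrow> ('e \<Rightarrow> 'v::linorder) \<Rightarrow> ('e \<Rightarrow> 'v) \<Rightarrow> ('v \<times> 'v) set" where
  "Phi3 A tail head = {(u, v) \<in> Phi A tail head. u \<noteq> v \<and> arcs_between A tail head u v \<noteq> {} \<and> arcs_between A tail head v u \<noteq> {}}"

definition f_Delta :: "'e set \<Rightarrow> ('e \<Rightarrow> 'v::linorder) \<Rightarrow> ('e \<Rightarrow> 'v) \<Rightarrow> ('e \<Rightarrow> 'r::comm_ring_1) \<Rightarrow> 'r fps" where
  "f_Delta A tail head \<upsilon> = (\<Prod>(u, v)\<in>Phi A tail head. f_pair A tail head \<upsilon> u v)"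

definition a_coef :: "'e set \<Rightarrow> ('e \<Rightarrow> 'v) \<Rightarrow> ('e \<Rightarrow> 'v) \<Rightarrow> ('e \<Rightarrow> 'r::comm_ring_1) \<Rightarrow> 'v \<Rightarrow> 'v \<Rightarrow> 'r" where
  "a_coef A tail head \<tau> u v = (\<Sum>a\<in>arcs_between A tail head u v. \<tau> a)"

definition d_coef :: "'e set \<Rightarrow> ('e \<Rightarrow> 'v) \<Rightarrow> ('e \<Rightarrow> 'v) \<Rightarrow> ('e \<Rightarrow> 'r::comm_ring_1) \<Rightarrow> ('e \<Rightarrow> 'r) \<Rightarrow> 'v \<Rightarrow> 'v \<Rightarrow> 'r" where
  "d_coef A tail head \<tau> \<upsilon> u v =
     (\<Sum>a\<in>arcs_between A tail head u v. \<Sum>a'\<in>arcs_between A tail head v u. \<tau> a * \<upsilon> a')"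

definition A_mat :: "'e set \<Rightarrow> ('e \<Rightarrow> 'v::finite) \<Rightarrow> ('e \<Rightarrow> 'v) \<Rightarrow> ('e \<Rightarrow> 'r::comm_ring_1) \<Rightarrow> ('e \<Rightarrow> 'r) \<Rightarrow> 'r fps ^ 'v ^ 'v" where
  "A_mat A tail head \<tau> \<upsilon> = (\<chi> w w'. finv (f_pair A tail head \<upsilon> w w') * fps_const (a_coef A tail head \<tau> w w'))"

definition D_mat :: "'e set \<Rightarrow> ('e \<Rightarrow> 'v) \<Rightarrow> ('e \<Rightarrow> 'v) \<Rightarrow> ('e \<Rightarrow> 'r::comm_ring_1) \<Rightarrow> ('e \<Rightarrow> 'r) \<Rightarrow> 'r fps ^ 'v::{finite,linorder} ^ 'v::{finite,linorder}" where
  "D_mat A tail head \<tau> \<upsilon> = (\<chi> w w'. if w = w' then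
      (\<Sum>(u, v)\<in>Phi3 A tail head. finv (f_pair A tail head \<upsilon> u v) *
         fps_const ((if w = u then d_coef A tail head \<tau> \<upsilon> u v else 0) + (if w = v then d_coef A tail head \<tau> \<upsilon> v u else 0)))
     else 0)"

end

theory Submission
  imports Defs
begin

(* Put g = (SUM m>=1. N_m t^m / m), so that Z = exp g and the claim says that f_Delta * det M,
   with M = I - t A + t^2 D, is the inverse of exp g. It suffices that f_Delta * det M has constant
   term 1 and logarithmic derivative -g'; the logarithmic derivatives are compared after
   multiplication by t.

   Since theta^G a a' depends on a only through the pair (tail a, head a), N_m = tr T^m for a
   transfer matrix T indexed by ordered pairs of vertices, hence t g' = tr G - |V|^2 with
   G = (I - t T)^-1. Write I - t T = K - t B C, where K = I + t J and J joins every pair to its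
   reverse. By the Woodbury identity, M = I - t C K^-1 B has the left inverse I + t C G B, and
   Jacobi's formula gives t (det M)' / det M = tr K^-1 - tr G. Finally K is block diagonal with
   blocks of determinant f_(u,v), so t f_Delta' / f_Delta = |V|^2 - tr K^-1, and the three
   contributions cancel. *)

section \<open>Inverses and exponentials of power series\<close>

lemma rinv_eqI:
  fixes x y :: "'r::comm_ring_1"
  assumes "x * y = 1"
  shows "rinv x = y"
  unfolding rinv_def
proof (rule the_equality)
  fix z assume "x * z = 1"
  then show "z = y" using assms by (metis mult.assoc mult.commute mult_1_left mult_1_right)
qed (fact assms)

lemma finv_eqI:
  fixes g h :: "'r::comm_ring_1 fps"
  assumes "g * h = 1"
  shows "finv g = h"
  unfolding finv_def
proof (rule the_equality)
  fix z assume "g * z = 1"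
  then show "z = h" using assms by (metis mult.assoc mult.commute mult_1_left mult_1_right)
qed (fact assms)

lemma fps_mult_finv:
  fixes g :: "'r::comm_ring_1 fps"
  assumes "fps_nth g 0 = 1"
  shows "g * finv g = 1"
  using fps_right_inverse[of g 1] assms by (simp add: finv_eqI)

context
  assumes of_nat_unit: "\<And>n::nat. n > 0 \<Longrightarrow> \<exists>y::'r::comm_ring_1. of_nat n * y = 1"
begin

lemma of_nat_mult_rinv: "n > 0 \<Longrightarrow> of_nat n * rinv (of_nat n :: 'r) = 1"
  using of_nat_unit rinv_eqI by metis

lemma fps_deriv_eq_0_imp_const:
  fixes h :: "'r fps"
  assumes "fps_deriv h = 0"
  shows "h = fps_const (fps_nth h 0)"
proof (rule fps_ext)
  fix n
  show "fps_nth h n = fps_nth (fps_const (fps_nth h 0)) n"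
  proof (cases n)
    case (Suc m)
    have "of_nat (Suc m) * fps_nth h (Suc m) = 0"
      using arg_cong[OF assms, of "\<lambda>f. fps_nth f m"] by (simp add: mult.commute)
    then have "(rinv (of_nat (Suc m)) * of_nat (Suc m)) * fps_nth h (Suc m) = (0::'r)"
      by (simp only: mult.assoc mult_zero_right)
    then show ?thesis
      using Suc of_nat_mult_rinv[of "Suc m"] by (simp add: mult.commute)
  qed simp
qed

definition exp_trunc :: "'r fps \<Rightarrow> nat \<Rightarrow> 'r fps" where
  "exp_trunc g N = (\<Sum>k\<le>N. fps_const (rinv (of_nat (fact k))) * g ^ k)"

lemma exp_trunc_nth:
  fixes g :: "'r fps"
  assumes "fps_nth g 0 = 0" and "n \<le> N"
  shows "fps_nth (exp_trunc g N) n = fps_nth (fps_exp_R g) n"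
proof -
  have "fps_nth (exp_trunc g N) n = (\<Sum>k\<le>N. rinv (of_nat (fact k)) * fps_nth (g ^ k) n)"
    by (simp add: exp_trunc_def fps_sum_nth)
  also have "\<dots> = (\<Sum>k\<le>n. rinv (of_nat (fact k)) * fps_nth (g ^ k) n)"
    using assms startsby_zero_power_prefix[of g]
    by (intro sum.mono_neutral_right) auto
  finally show ?thesis by (simp add: fps_exp_R_def)
qed

lemma fps_deriv_exp_trunc:
  fixes g :: "'r fps"
  shows "fps_deriv (exp_trunc g (Suc N)) = fps_deriv g * exp_trunc g N"
proof -
  have rinv_fact_Suc: "rinv (of_nat (fact (Suc k))) * of_nat (Suc k) = rinv (of_nat (fact k) :: 'r)"
    for k
  proof -
    have "of_nat (fact k) * (rinv (of_nat (fact (Suc k))) * of_nat (Suc k)) = (1::'r)"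
      using of_nat_mult_rinv[of "fact (Suc k)"] by (simp add: algebra_simps)
    then show ?thesis by (rule rinv_eqI[symmetric])
  qed
  have "fps_deriv (exp_trunc g (Suc N))
      = (\<Sum>k\<le>Suc N. fps_const (rinv (of_nat (fact k))) * fps_deriv (g ^ k))"
    by (simp only: exp_trunc_def fps_deriv_sum fps_deriv_mult_const_left)
  also have "\<dots> = (\<Sum>k\<le>N. fps_const (rinv (of_nat (fact (Suc k)))) * fps_deriv (g ^ Suc k))"
    by (simp only: sum.atMost_Suc_shift power_0 fps_deriv_1 mult_zero_right add_0_left)
  also have "\<dots> = (\<Sum>k\<le>N. fps_deriv g * (fps_const (rinv (of_nat (fact k))) * g ^ k))"
  proof (rule sum.cong[OF refl])
    fix k
    have "fps_const (rinv (of_nat (fact (Suc k)))) * fps_deriv (g ^ Suc k)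
        = fps_const (rinv (of_nat (fact (Suc k))) * of_nat (Suc k)) * fps_deriv g * g ^ k"
      by (simp only: fps_deriv_power diff_Suc_1 fps_of_nat[symmetric] mult.assoc[symmetric] fps_const_mult)
    also have "\<dots> = fps_deriv g * (fps_const (rinv (of_nat (fact k))) * g ^ k)"
      unfolding rinv_fact_Suc by (simp only: mult_ac)
    finally show "fps_const (rinv (of_nat (fact (Suc k)))) * fps_deriv (g ^ Suc k)
        = fps_deriv g * (fps_const (rinv (of_nat (fact k))) * g ^ k)" .
  qed
  finally show ?thesis by (simp only: exp_trunc_def sum_distrib_left)
qed

lemma fps_deriv_fps_exp_R:
  fixes g :: "'r fps"
  assumes "fps_nth g 0 = 0"
  shows "fps_deriv (fps_exp_R g) = fps_deriv g * fps_exp_R g"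
proof (rule fps_ext)
  fix n
  have "fps_nth (fps_deriv (fps_exp_R g)) n = fps_nth (fps_deriv (exp_trunc g (Suc n))) n"
    using exp_trunc_nth[OF assms, of "Suc n" "Suc n"] by simp
  also have "\<dots> = fps_nth (fps_deriv g * exp_trunc g n) n"
    by (simp only: fps_deriv_exp_trunc)
  also have "\<dots> = fps_nth (fps_deriv g * fps_exp_R g) n"
    by (simp add: fps_mult_nth exp_trunc_nth[OF assms])
  finally show "fps_nth (fps_deriv (fps_exp_R g)) n = fps_nth (fps_deriv g * fps_exp_R g) n" .
qed

lemma fps_exp_R_nth_0: "fps_nth (fps_exp_R (g :: 'r fps)) 0 = 1"
  using of_nat_mult_rinv[of 1] by (simp add: fps_exp_R_def)

lemma finv_fps_exp_R_eqI:
  fixes g h :: "'r fps"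
  assumes g0: "fps_nth g 0 = 0" and h0: "fps_nth h 0 = 1"
    and "fps_deriv h + h * fps_deriv g = 0"
  shows "finv (fps_exp_R g) = h"
proof (rule finv_eqI)
  have "fps_deriv (fps_exp_R g * h) = fps_exp_R g * (fps_deriv h + h * fps_deriv g)"
    by (simp add: fps_deriv_fps_exp_R[OF g0] algebra_simps)
  then have "fps_deriv (fps_exp_R g * h) = 0" using assms(3) by simp
  from fps_deriv_eq_0_imp_const[OF this]
  show "fps_exp_R g * h = 1" by (simp add: fps_exp_R_nth_0 h0)
qed

end

section \<open>Matrices over power series\<close>

definition smult_mat :: "'a::times \<Rightarrow> 'a^'n^'m \<Rightarrow> 'a^'n^'m" where
  "smult_mat c A = (\<chi> i j. c * A $ i $ j)"

lemma smult_mat_nth [simp]: "smult_mat c A $ i $ j = c * A $ i $ j"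
  by (simp add: smult_mat_def)

lemma smult_mat_0 [simp]: "smult_mat c (0 :: 'a::mult_zero^'n^'m) = 0"
  by (simp add: vec_eq_iff)

lemma smult_mat_1 [simp]: "smult_mat 1 A = (A::'a::monoid_mult^'n^'m)"
  by (simp add: vec_eq_iff)

lemma smult_mat_add: "smult_mat c (A + B) = smult_mat c A + smult_mat (c::'a::semiring) B"
  by (simp add: vec_eq_iff distrib_left)

lemma smult_mat_diff: "smult_mat c (A - B) = smult_mat c A - smult_mat (c::'a::ring) B"
  by (simp add: vec_eq_iff right_diff_distrib)

lemma smult_mat_uminus: "smult_mat c (- A) = - smult_mat (c::'a::ring) A"
  by (simp add: vec_eq_iff)

lemma smult_mat_smult_mat: "smult_mat c (smult_mat d A) = smult_mat (c * d) (A::'a::semigroup_mult^'n^'m)"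
  by (simp add: vec_eq_iff mult.assoc)

lemma matrix_mul_smult_left:
  "smult_mat c A ** B = smult_mat c (A ** B :: 'a::comm_semiring_1^'n^'m)"
  by (simp add: vec_eq_iff matrix_matrix_mult_def sum_distrib_left mult.assoc)

lemma matrix_mul_smult_right:
  "A ** smult_mat c B = smult_mat c (A ** B :: 'a::comm_semiring_1^'n^'m)"
  by (simp add: vec_eq_iff matrix_matrix_mult_def sum_distrib_left mult.left_commute)

lemma trace_smult_mat: "trace (smult_mat c A) = c * trace (A :: 'a::comm_semiring_1^'n^'n)"
  by (simp add: trace_def sum_distrib_left)

lemma trace_uminus: "trace (- A) = - trace (A :: 'a::comm_ring_1^'n^'n)"
  by (simp add: trace_def sum_negf)

lemma matrix_add_rdistrib: "(A + B) ** C = A ** C + B ** C"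
  by (simp add: vec_eq_iff matrix_matrix_mult_def distrib_right sum.distrib)

lemma matrix_diff_ldistrib: "A ** (B - C) = A ** B - A ** (C :: 'a::ring_1^'n^'m)"
  by (simp add: vec_eq_iff matrix_matrix_mult_def right_diff_distrib sum_subtractf)

lemma matrix_diff_rdistrib: "(A - B) ** C = A ** C - B ** (C :: 'a::ring_1^'n^'m)"
  by (simp add: vec_eq_iff matrix_matrix_mult_def left_diff_distrib sum_subtractf)

lemma matrix_uminus_left: "(- A) ** B = - (A ** B :: 'a::ring_1^'n^'m)"
  by (simp add: vec_eq_iff matrix_matrix_mult_def sum_negf)

lemmas matrix_ring_simps = matrix_add_ldistrib matrix_add_rdistrib matrix_diff_ldistrib
  matrix_diff_rdistrib matrix_uminus_left matrix_mul_smult_left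
  matrix_mul_smult_right smult_mat_add smult_mat_diff smult_mat_uminus smult_mat_smult_mat
  matrix_mul_lid matrix_mul_rid

lemma map_matrix_fps_deriv_mult:
  "map_matrix fps_deriv (A ** B) = map_matrix fps_deriv A ** B + A ** map_matrix fps_deriv B"
  by (simp add: vec_eq_iff matrix_matrix_mult_def fps_deriv_sum sum.distrib[symmetric] algebra_simps)

lemma map_matrix_fps_deriv_diff:
  "map_matrix fps_deriv (A - B) = map_matrix fps_deriv A - map_matrix fps_deriv (B :: 'a::comm_ring_1 fps^'n^'m)"
  by (simp add: vec_eq_iff)

lemma map_matrix_fps_deriv_smult:
  "map_matrix fps_deriv (smult_mat c A) = smult_mat (fps_deriv c) A + smult_mat c (map_matrix fps_deriv A)"
  by (simp add: vec_eq_iff algebra_simps)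

lemma map_matrix_fps_deriv_mat: "map_matrix fps_deriv (mat c) = mat (fps_deriv c)"
  by (simp add: vec_eq_iff mat_def)

lemma fps_deriv_prod:
  fixes f :: "'a \<Rightarrow> 'r::comm_ring_1 fps"
  assumes "finite S"
  shows "fps_deriv (prod f S) = (\<Sum>j\<in>S. fps_deriv (f j) * prod f (S - {j}))"
  using assms
proof (induction S rule: finite_induct)
  case (insert x F)
  have "f x * fps_deriv (prod f F) = (\<Sum>j\<in>F. fps_deriv (f j) * prod f (insert x F - {j}))"
  proof -
    have "insert x F - {j} = insert x (F - {j})" if "j \<in> F" for j
      using that insert.hyps by auto
    then show ?thesis
      using insert by (simp add: sum_distrib_left mult_ac cong: sum.cong)
  qed
  then show ?case
    using insert by (simp add: algebra_simps)
qed simp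

lemma fps_deriv_prod_units:
  fixes F \<phi> :: "'a \<Rightarrow> 'r::comm_ring_1 fps"
  assumes S: "finite S" and inv: "\<And>p. p \<in> S \<Longrightarrow> F p * \<phi> p = 1"
  shows "fps_deriv (prod F S) = prod F S * (\<Sum>p\<in>S. fps_deriv (F p) * \<phi> p)"
proof -
  have "fps_deriv (F j) * prod F (S - {j}) = fps_deriv (F j) * \<phi> j * prod F S" if j: "j \<in> S" for j
  proof -
    have "prod F S = F j * prod F (S - {j})" by (rule prod.remove[OF S j])
    then have "\<phi> j * prod F S = prod F (S - {j})"
      using inv[OF j] by (simp add: mult.assoc[symmetric] mult.commute[of "\<phi> j"])
    then show ?thesis by (simp add: mult.assoc)
  qed
  then show ?thesis
    by (simp add: fps_deriv_prod[OF S] sum_distrib_left sum_distrib_right mult.commute cong: sum.cong)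
qed

lemma fps_nth_prod_0: "fps_nth (prod f S) 0 = (\<Prod>i\<in>S. fps_nth (f i) 0)"
  for f :: "'a \<Rightarrow> 'r::comm_ring_1 fps"
  by (induction S rule: infinite_finite_induct) auto

lemma fps_deriv_det_rows:
  fixes Y :: "'r::comm_ring_1 fps^'n^'n"
  shows "fps_deriv (det Y) =
    (\<Sum>j\<in>UNIV. det (\<chi> i. if i = j then map_matrix fps_deriv Y $ j else Y $ i))"
proof -
  let ?Y = "\<lambda>j. \<chi> i. if i = j then map_matrix fps_deriv Y $ j else Y $ i"
  have deriv_prod: "fps_deriv (\<Prod>i\<in>UNIV. Y $ i $ p i) = (\<Sum>j\<in>UNIV. \<Prod>i\<in>UNIV. ?Y j $ i $ p i)"
    for p :: "'n \<Rightarrow> 'n"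
  proof -
    have "(\<Prod>i\<in>UNIV. ?Y j $ i $ p i) = fps_deriv (Y $ j $ p j) * (\<Prod>i\<in>UNIV - {j}. Y $ i $ p i)"
      for j
    proof -
      have "(\<Prod>i\<in>UNIV - {j}. ?Y j $ i $ p i) = (\<Prod>i\<in>UNIV - {j}. Y $ i $ p i)"
        by (rule prod.cong) auto
      then show ?thesis by (simp add: prod.remove[of UNIV j])
    qed
    then show ?thesis by (simp add: fps_deriv_prod)
  qed
  have "fps_deriv (det Y)
      = (\<Sum>p\<in>{p. p permutes UNIV}. \<Sum>j\<in>UNIV. of_int (sign p) * (\<Prod>i\<in>UNIV. ?Y j $ i $ p i))"
    unfolding det_def by (simp add: fps_deriv_sum deriv_prod sum_distrib_left)
  also have "\<dots> = (\<Sum>j\<in>UNIV. det (?Y j))"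
    unfolding det_def by (rule sum.swap)
  finally show ?thesis .
qed

lemma det_row_lincomb:
  fixes Y :: "'r::comm_ring_1^'n^'n" and c :: "'n \<Rightarrow> 'r"
  shows "det (\<chi> i. if i = j then (\<Sum>m\<in>UNIV. c m *s Y $ m) else Y $ i) = c j * det Y"
proof -
  have repeated_row: "det (\<chi> i. if i = j then Y $ m else Y $ i) = 0" if "m \<noteq> j" for m
    using that by (intro det_identical_rows[of j m]) (auto simp: row_def vec_eq_iff)
  have "det (\<chi> i. if i = j then (\<Sum>m\<in>UNIV. c m *s Y $ m) else Y $ i)
      = (\<Sum>m\<in>UNIV. c m * det (\<chi> i. if i = j then Y $ m else Y $ i))"
    by (simp add: det_linear_row_sum det_row_mul)
  also have "\<dots> = c j * det (\<chi> i. if i = j then Y $ j else Y $ i)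
      + (\<Sum>m\<in>UNIV - {j}. c m * det (\<chi> i. if i = j then Y $ m else Y $ i))"
    by (rule sum.remove) simp_all
  also have "(\<Sum>m\<in>UNIV - {j}. c m * det (\<chi> i. if i = j then Y $ m else Y $ i)) = 0"
    by (simp add: repeated_row)
  also have "(\<chi> i. if i = j then Y $ j else Y $ i) = Y"
    by (simp add: vec_eq_iff)
  finally show ?thesis by simp
qed

lemma fps_deriv_det:
  fixes Y Z :: "'r::comm_ring_1 fps^'n^'n"
  assumes "Z ** Y = mat 1"
  shows "fps_deriv (det Y) = det Y * trace (map_matrix fps_deriv Y ** Z)"
proof -
  let ?c = "\<lambda>j m. (map_matrix fps_deriv Y ** Z) $ j $ m"
  have rows: "map_matrix fps_deriv Y $ j = (\<Sum>m\<in>UNIV. ?c j m *s Y $ m)" for j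
  proof -
    have "(\<Sum>m\<in>UNIV. ?c j m *s Y $ m) = (map_matrix fps_deriv Y ** Z ** Y) $ j"
      by (simp add: vec_eq_iff sum_component matrix_matrix_mult_def)
    also have "\<dots> = map_matrix fps_deriv Y $ j"
      by (simp flip: matrix_mul_assoc add: assms)
    finally show ?thesis ..
  qed
  have "fps_deriv (det Y) = (\<Sum>j\<in>UNIV. ?c j j * det Y)"
    unfolding fps_deriv_det_rows by (rule sum.cong[OF refl]) (simp only: rows det_row_lincomb)
  then show ?thesis
    by (simp add: trace_def sum_distrib_left mult.commute)
qed

lemma fps_nth_det_0:
  fixes M :: "'r::comm_ring_1 fps^'n^'n"
  shows "fps_nth (det M) 0 = det (map_matrix (\<lambda>f. fps_nth f 0) M)"
  unfolding det_def by (simp add: fps_sum_nth fps_nth_prod_0 flip: fps_of_int)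

lemma woodbury_left_inverse:
  fixes K Ki G :: "'a::comm_ring_1^'n^'n" and B :: "'a^'m^'n" and C :: "'a^'n^'m"
  assumes K_Ki: "K ** Ki = mat 1"
    and G_L: "G ** (K - smult_mat x (B ** C)) = mat 1"
  shows "(mat 1 + smult_mat x (C ** G ** B)) ** (mat 1 - smult_mat x (C ** Ki ** B)) = mat 1"
proof -
  have G_eq: "G - smult_mat x (G ** B ** C ** Ki) = Ki"
    using arg_cong[OF G_L, of "\<lambda>M. M ** Ki"] K_Ki
    by (simp add: matrix_ring_simps matrix_mul_assoc flip: matrix_mul_assoc[of G K Ki])
  have "(mat 1 + smult_mat x (C ** G ** B)) ** (mat 1 - smult_mat x (C ** Ki ** B))
      = mat 1 + smult_mat x (C ** (G - smult_mat x (G ** B ** C ** Ki) - Ki) ** B)"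
    by (simp add: matrix_ring_simps matrix_mul_assoc algebra_simps)
  also have "\<dots> = mat 1"
    by (simp add: G_eq)
  finally show ?thesis .
qed

lemma X_deriv_inverse_matrix:
  fixes K Ki :: "'a::comm_ring_1 fps^'n^'n"
  assumes Ki_K: "Ki ** K = mat 1" and K_Ki: "K ** Ki = mat 1"
    and X_dK: "smult_mat fps_X (map_matrix fps_deriv K) = K - mat 1"
  shows "smult_mat fps_X (map_matrix fps_deriv Ki) = Ki ** Ki - Ki"
proof -
  have "map_matrix fps_deriv K ** Ki + K ** map_matrix fps_deriv Ki = 0"
    using arg_cong[OF K_Ki, of "map_matrix fps_deriv"]
    by (simp add: map_matrix_fps_deriv_mult map_matrix_fps_deriv_mat)
  then have "Ki ** (map_matrix fps_deriv K ** Ki + K ** map_matrix fps_deriv Ki) = 0"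
    by simp
  then have "Ki ** map_matrix fps_deriv K ** Ki + map_matrix fps_deriv Ki = 0"
    by (simp add: matrix_ring_simps matrix_mul_assoc Ki_K)
  then have "smult_mat fps_X (map_matrix fps_deriv Ki)
      = - (Ki ** smult_mat fps_X (map_matrix fps_deriv K) ** Ki)"
    by (simp add: matrix_ring_simps eq_neg_iff_add_eq_0 add.commute flip: smult_mat_add)
  also have "\<dots> = Ki ** Ki - Ki"
    by (simp add: X_dK matrix_ring_simps Ki_K flip: matrix_mul_assoc)
  finally show ?thesis .
qed

lemma woodbury_trace_deriv:
  fixes K Ki G :: "'a::comm_ring_1 fps^'n^'n" and B :: "'a fps^'m^'n" and C :: "'a fps^'n^'m"
  assumes Ki_K: "Ki ** K = mat 1" and K_Ki: "K ** Ki = mat 1"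
    and G_L: "G ** (K - smult_mat fps_X (B ** C)) = mat 1"
    and L_G: "(K - smult_mat fps_X (B ** C)) ** G = mat 1"
    and dB: "map_matrix fps_deriv B = 0" and dC: "map_matrix fps_deriv C = 0"
    and X_dK: "smult_mat fps_X (map_matrix fps_deriv K) = K - mat 1"
  shows "fps_X * trace (map_matrix fps_deriv (mat 1 - smult_mat fps_X (C ** Ki ** B))
            ** (mat 1 + smult_mat fps_X (C ** G ** B))) = trace Ki - trace G"
proof -
  have "map_matrix fps_deriv (mat 1 - smult_mat fps_X (C ** Ki ** B))
      = - (C ** Ki ** B + smult_mat fps_X (C ** map_matrix fps_deriv Ki ** B))"
    by (simp add: map_matrix_fps_deriv_diff map_matrix_fps_deriv_mat map_matrix_fps_deriv_smult
        map_matrix_fps_deriv_mult dB dC)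
  then have "smult_mat fps_X (map_matrix fps_deriv (mat 1 - smult_mat fps_X (C ** Ki ** B)))
      = - smult_mat fps_X (C ** (Ki + smult_mat fps_X (map_matrix fps_deriv Ki)) ** B)"
    by (simp add: matrix_ring_simps)
  also have "\<dots> = - smult_mat fps_X (C ** Ki ** Ki ** B)"
    by (simp add: X_deriv_inverse_matrix[OF Ki_K K_Ki X_dK] matrix_mul_assoc)
  finally have X_dY: "smult_mat fps_X (map_matrix fps_deriv (mat 1 - smult_mat fps_X (C ** Ki ** B)))
      = - smult_mat fps_X (C ** Ki ** Ki ** B)" .
  define Z where "Z = mat 1 + smult_mat fps_X (C ** G ** B)"
  have "K ** G = mat 1 + smult_mat fps_X (B ** C ** G)"
    using L_G by (simp add: matrix_ring_simps matrix_mul_assoc algebra_simps)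
  then have B_Z: "B ** Z = K ** G ** B"
    by (simp add: Z_def matrix_ring_simps matrix_mul_assoc)
  have Ki_K_M: "Ki ** (K ** M) = M" for M :: "'a fps^'k^'n"
    by (simp add: matrix_mul_assoc Ki_K)
  have "G - smult_mat fps_X (G ** B ** C ** Ki) = Ki"
    using arg_cong[OF G_L, of "\<lambda>M. M ** Ki"] K_Ki
    by (simp add: matrix_ring_simps matrix_mul_assoc flip: matrix_mul_assoc[of G K Ki])
  then have G_eq: "smult_mat fps_X (G ** B ** C ** Ki) = G - Ki"
    by (simp add: algebra_simps)
  \<comment> \<open>\<open>B Z = K G B\<close> collapses the trace to \<open>tr (Ki G B C)\<close>, which \<open>G_eq\<close> evaluates.\<close>
  have "fps_X * trace (map_matrix fps_deriv (mat 1 - smult_mat fps_X (C ** Ki ** B)) ** Z)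
      = trace (smult_mat fps_X (map_matrix fps_deriv (mat 1 - smult_mat fps_X (C ** Ki ** B))) ** Z)"
    by (simp only: matrix_mul_smult_left trace_smult_mat)
  also have "\<dots> = - (fps_X * trace (C ** (Ki ** (Ki ** (B ** Z)))))"
    by (simp add: X_dY matrix_uminus_left matrix_mul_smult_left trace_smult_mat trace_uminus
        matrix_mul_assoc)
  also have "\<dots> = - (fps_X * trace (C ** (Ki ** (G ** B))))"
    by (simp add: B_Z Ki_K_M flip: matrix_mul_assoc)
  also have "\<dots> = - trace (smult_mat fps_X (G ** B ** C ** Ki))"
    using trace_mul_sym[of C "Ki ** (G ** B)"] trace_mul_sym[of Ki "G ** B ** C"]
    by (simp add: trace_smult_mat matrix_mul_assoc)
  also have "\<dots> = trace Ki - trace G"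
    by (simp add: G_eq trace_sub)
  finally show ?thesis by (simp only: Z_def)
qed

section \<open>Matrix powers and closed walks\<close>

primrec matpow :: "'a::semiring_1^'n^'n \<Rightarrow> nat \<Rightarrow> 'a^'n^'n" where
  "matpow A 0 = mat 1"
| "matpow A (Suc k) = matpow A k ** A"

lemma matpow_Suc_left: "matpow A (Suc k) = A ** matpow A k"
proof (induction k)
  case (Suc k)
  then show ?case by (metis matpow.simps(2) matrix_mul_assoc)
qed simp

definition matpow_series :: "'a::comm_ring_1^'n^'n \<Rightarrow> 'a fps^'n^'n" where
  "matpow_series A = (\<chi> i j. Abs_fps (\<lambda>k. matpow A k $ i $ j))"

lemma fps_nth_trace_matpow_series: "fps_nth (trace (matpow_series A)) k = trace (matpow A k)"
  by (simp add: matpow_series_def trace_def fps_sum_nth)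

lemma matpow_series_mult_left:
  "matpow_series A ** (mat 1 - smult_mat fps_X (map_matrix fps_const A)) = mat 1"
proof -
  let ?G = "matpow_series A"
  have "(?G ** (mat 1 - smult_mat fps_X (map_matrix fps_const A))) $ i $ j
      = ?G $ i $ j - fps_X * (\<Sum>l\<in>UNIV. ?G $ i $ l * fps_const (A $ l $ j))" for i j
    by (simp add: matrix_diff_ldistrib matrix_mul_smult_right) (simp add: matrix_matrix_mult_def)
  moreover have "fps_nth (?G $ i $ j - fps_X * (\<Sum>l\<in>UNIV. ?G $ i $ l * fps_const (A $ l $ j))) k
      = fps_nth (mat 1 $ i $ j) k" for i j k
    by (cases k) (simp_all add: matpow_series_def fps_sum_nth matrix_matrix_mult_def mat_def)
  ultimately show ?thesis by (simp add: vec_eq_iff fps_eq_iff)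
qed

lemma matpow_series_mult_right:
  "(mat 1 - smult_mat fps_X (map_matrix fps_const A)) ** matpow_series A = mat 1"
proof -
  let ?G = "matpow_series A"
  have "((mat 1 - smult_mat fps_X (map_matrix fps_const A)) ** ?G) $ i $ j
      = ?G $ i $ j - fps_X * (\<Sum>l\<in>UNIV. fps_const (A $ i $ l) * ?G $ l $ j)" for i j
    by (simp add: matrix_diff_rdistrib matrix_mul_smult_left) (simp add: matrix_matrix_mult_def)
  moreover have "fps_nth (?G $ i $ j - fps_X * (\<Sum>l\<in>UNIV. fps_const (A $ i $ l) * ?G $ l $ j)) k
      = fps_nth (mat 1 $ i $ j) k" for i j k
    by (cases k) (simp_all add: matpow_series_def fps_sum_nth matrix_matrix_mult_def mat_def
        matpow_Suc_left del: matpow.simps(2))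
  ultimately show ?thesis by (simp add: vec_eq_iff fps_eq_iff)
qed

definition cycle_sum :: "'a set \<Rightarrow> ('a \<Rightarrow> 'a \<Rightarrow> 'r::comm_semiring_1) \<Rightarrow> nat \<Rightarrow> 'r" where
  "cycle_sum S F m = (\<Sum>p\<in>{..<m} \<rightarrow>\<^sub>E S. \<Prod>i<m. F (p i) (p (Suc i mod m)))"

lemma sum_PiE_insert:
  assumes "i \<notin> I"
  shows "(\<Sum>s\<in>Pi\<^sub>E (insert i I) T. h s) = (\<Sum>v\<in>T i. \<Sum>g\<in>Pi\<^sub>E I T. h (g(i := v)))"
proof -
  have "(\<Sum>s\<in>Pi\<^sub>E (insert i I) T. h s) = (\<Sum>(v, g)\<in>T i \<times> Pi\<^sub>E I T. h (g(i := v)))"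
    unfolding PiE_insert_eq
    by (subst sum.reindex[OF inj_combinator[OF assms]]) (simp add: case_prod_beta')
  then show ?thesis by (simp add: sum.cartesian_product)
qed

lemma matpow_Suc_nth_walk_sum:
  fixes A :: "'a::comm_semiring_1^'n^'n"
  shows "matpow A (Suc k) $ x $ y = (\<Sum>s\<in>{1..k} \<rightarrow>\<^sub>E UNIV.
            \<Prod>i\<le>k. A $ (s(0 := x, Suc k := y)) i $ (s(0 := x, Suc k := y)) (Suc i))"
proof (induction k arbitrary: y)
  case 0
  show ?case by simp
next
  case (Suc k)
  have "{1..Suc k} = insert (Suc k) {1..k}" by auto
  then have "(\<Sum>s\<in>{1..Suc k} \<rightarrow>\<^sub>E UNIV.
        \<Prod>i\<le>Suc k. A $ (s(0 := x, Suc (Suc k) := y)) i $ (s(0 := x, Suc (Suc k) := y)) (Suc i))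
      = (\<Sum>v\<in>UNIV. \<Sum>g\<in>{1..k} \<rightarrow>\<^sub>E UNIV.
        \<Prod>i\<le>Suc k. A $ (g(Suc k := v, 0 := x, Suc (Suc k) := y)) i
                     $ (g(Suc k := v, 0 := x, Suc (Suc k) := y)) (Suc i))"
    by (simp add: sum_PiE_insert)
  also have "\<dots> = (\<Sum>v\<in>UNIV. (\<Sum>g\<in>{1..k} \<rightarrow>\<^sub>E UNIV.
        \<Prod>i\<le>k. A $ (g(0 := x, Suc k := v)) i $ (g(0 := x, Suc k := v)) (Suc i)) * A $ v $ y)"
  proof -
    have "(\<Prod>i\<le>Suc k. A $ (g(Suc k := v, 0 := x, Suc (Suc k) := y)) i
                     $ (g(Suc k := v, 0 := x, Suc (Suc k) := y)) (Suc i))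
        = (\<Prod>i\<le>k. A $ (g(0 := x, Suc k := v)) i $ (g(0 := x, Suc k := v)) (Suc i)) * A $ v $ y"
      for g :: "nat \<Rightarrow> 'n" and v
    proof -
      have "(\<Prod>i\<le>k. A $ (g(Suc k := v, 0 := x, Suc (Suc k) := y)) i
                     $ (g(Suc k := v, 0 := x, Suc (Suc k) := y)) (Suc i))
          = (\<Prod>i\<le>k. A $ (g(0 := x, Suc k := v)) i $ (g(0 := x, Suc k := v)) (Suc i))"
        by (rule prod.cong) auto
      then show ?thesis by simp
    qed
    then show ?thesis by (simp add: sum_distrib_right)
  qed
  also have "\<dots> = matpow A (Suc (Suc k)) $ x $ y"
    unfolding Suc.IH[symmetric] by (simp add: matrix_matrix_mult_def)
  finally show ?case ..
qed

lemma cycle_sum_UNIV_eq_trace: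
  fixes A :: "'a::comm_semiring_1^'n^'n"
  assumes "m > 0"
  shows "cycle_sum UNIV (\<lambda>i j. A $ i $ j) m = trace (matpow A m)"
proof -
  obtain k where m: "m = Suc k" using assms by (cases m) auto
  have "{..<Suc k} = insert 0 {1..k}" by auto
  then have "cycle_sum UNIV (\<lambda>i j. A $ i $ j) m
      = (\<Sum>v\<in>UNIV. \<Sum>g\<in>{1..k} \<rightarrow>\<^sub>E UNIV.
          \<Prod>i<Suc k. A $ (g(0 := v)) i $ (g(0 := v)) (Suc i mod Suc k))"
    by (simp add: cycle_sum_def m sum_PiE_insert)
  also have "\<dots> = (\<Sum>v\<in>UNIV. \<Sum>g\<in>{1..k} \<rightarrow>\<^sub>E UNIV.
          \<Prod>i\<le>k. A $ (g(0 := v, Suc k := v)) i $ (g(0 := v, Suc k := v)) (Suc i))"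
    unfolding lessThan_Suc_atMost
    by (intro sum.cong prod.cong refl) (auto simp: mod_Suc)
  also have "\<dots> = trace (matpow A m)"
    by (simp add: matpow_Suc_nth_walk_sum m trace_def del: matpow.simps)
  finally show ?thesis .
qed

lemma prod_lessThan_rotate:
  assumes "m > 0"
  shows "(\<Prod>j<m. f j) = (\<Prod>i<m. f (Suc i mod m))"
  by (rule prod.reindex_bij_witness[where j = "\<lambda>j. if j = 0 then m - 1 else j - 1"
        and i = "\<lambda>i. Suc i mod m"]) (use assms in \<open>auto simp: mod_Suc\<close>)

lemma cycle_sum_factor_commute:
  fixes P :: "'a \<Rightarrow> 'b::finite \<Rightarrow> 'r::comm_semiring_1" and Q :: "'b \<Rightarrow> 'a \<Rightarrow> 'r"
  assumes S: "finite S" and m: "m > 0"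
  shows "cycle_sum S (\<lambda>a a'. \<Sum>t\<in>UNIV. P a t * Q t a') m
       = cycle_sum UNIV (\<lambda>t t'. \<Sum>a\<in>S. Q t a * P a t') m"
proof -
  define pred where "pred j = (if j = 0 then m - 1 else j - 1)" for j
  have pred_Suc: "pred (Suc i mod m) = i" if "i < m" for i
    using that m by (auto simp: pred_def mod_Suc)
  have rotate: "(\<Prod>i<m. P (p i) (s i) * Q (s i) (p (Suc i mod m)))
      = (\<Prod>j<m. Q (s (pred j)) (p j) * P (p j) (s j))" for p s
  proof -
    have "(\<Prod>i<m. Q (s i) (p (Suc i mod m))) = (\<Prod>i<m. Q (s (pred (Suc i mod m))) (p (Suc i mod m)))"
      by (rule prod.cong) (auto simp: pred_Suc)
    also have "\<dots> = (\<Prod>j<m. Q (s (pred j)) (p j))"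
      by (rule prod_lessThan_rotate[OF m, symmetric])
    finally show ?thesis by (simp add: prod.distrib mult.commute)
  qed
  have "cycle_sum S (\<lambda>a a'. \<Sum>t\<in>UNIV. P a t * Q t a') m
      = (\<Sum>p\<in>{..<m} \<rightarrow>\<^sub>E S. \<Sum>s\<in>{..<m} \<rightarrow>\<^sub>E UNIV. \<Prod>i<m. P (p i) (s i) * Q (s i) (p (Suc i mod m)))"
    unfolding cycle_sum_def by (intro sum.cong refl prod_sum_PiE) auto
  also have "\<dots> = (\<Sum>s\<in>{..<m} \<rightarrow>\<^sub>E UNIV. \<Sum>p\<in>{..<m} \<rightarrow>\<^sub>E S. \<Prod>j<m. Q (s (pred j)) (p j) * P (p j) (s j))"
    unfolding rotate by (rule sum.swap)
  also have "\<dots> = (\<Sum>s\<in>{..<m} \<rightarrow>\<^sub>E UNIV. \<Prod>j<m. \<Sum>a\<in>S. Q (s (pred j)) a * P a (s j))"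
    using S by (intro sum.cong refl prod_sum_PiE[symmetric]) auto
  also have "\<dots> = (\<Sum>s\<in>{..<m} \<rightarrow>\<^sub>E UNIV.
      \<Prod>i<m. \<Sum>a\<in>S. Q (s (pred (Suc i mod m))) a * P a (s (Suc i mod m)))"
    by (intro sum.cong refl prod_lessThan_rotate[OF m])
  also have "\<dots> = cycle_sum UNIV (\<lambda>t t'. \<Sum>a\<in>S. Q t a * P a t') m"
    unfolding cycle_sum_def by (intro sum.cong prod.cong refl) (simp add: pred_Suc)
  finally show ?thesis .
qed

lemma cycle_sum_cong:
  assumes "\<And>a b. a \<in> S \<Longrightarrow> b \<in> S \<Longrightarrow> F a b = G a b"
  shows "cycle_sum S F m = cycle_sum S G m"
  unfolding cycle_sum_def using assms
  by (intro sum.cong prod.cong refl) (auto simp: PiE_def Pi_def)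

lemma N_paths_eq_cycle_sum:
  assumes "\<And>a a'. head a \<noteq> tail a' \<Longrightarrow> \<theta> a a' = 0"
  shows "N_paths A tail head \<theta> m = cycle_sum A \<theta> m"
  unfolding N_paths_def cycle_sum_def
proof (intro sum.cong refl)
  fix p
  show "(if \<forall>i<m. head (p i) = tail (p ((i + 1) mod m)) then \<Prod>i<m. \<theta> (p i) (p ((i + 1) mod m)) else 0)
      = (\<Prod>i<m. \<theta> (p i) (p (Suc i mod m)))"
    using assms by (auto intro: prod_zero)
qed

section \<open>The transfer matrix on ordered pairs of vertices\<close>

locale arc_weights =
  fixes A :: "'e set" and tail head :: "'e \<Rightarrow> 'v::finite" and \<tau> \<upsilon> :: "'e \<Rightarrow> 'r::comm_ring_1"
begin

abbreviation \<alpha> :: "'v \<times> 'v \<Rightarrow> 'r" where "\<alpha> p \<equiv> a_coef A tail head \<tau> (fst p) (snd p)"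

abbreviation \<beta> :: "'v \<times> 'v \<Rightarrow> 'r" where "\<beta> p \<equiv> a_coef A tail head \<upsilon> (fst p) (snd p)"

(* Entry (p, q) is the total weight theta^G a a' over the arcs a' with endpoint pair q, for any arc
   a with endpoint pair p: theta^G a a' depends on a only through (tail a, head a). *)
definition transfer_mat :: "'r^('v \<times> 'v)^('v \<times> 'v)" where
  "transfer_mat = (\<chi> p q. (if snd p = fst q then \<alpha> q else 0) - (if q = prod.swap p then \<beta> q else 0))"

lemma N_paths_thetaG:
  assumes "finite A" and "m > 0"
  shows "N_paths A tail head (thetaG A tail head \<tau> \<upsilon>) m = trace (matpow transfer_mat m)"
proof -
  define P where "P a t = (of_bool (t = (tail a, head a)) :: 'r)" for a and t :: "'v \<times> 'v"
  define Q where "Q t a = (if tail a = snd t then \<tau> a - (if head a = fst t then \<upsilon> a else 0) else 0)"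
    for t :: "'v \<times> 'v" and a
  have thetaG_factor: "thetaG A tail head \<tau> \<upsilon> a a' = (\<Sum>t\<in>UNIV. P a t * Q t a')"
    if "a' \<in> A" for a a'
    using that by (simp add: P_def Q_def thetaG_def inv_arcs_def arcs_between_def)
  have "N_paths A tail head (thetaG A tail head \<tau> \<upsilon>) m = cycle_sum A (thetaG A tail head \<tau> \<upsilon>) m"
    by (rule N_paths_eq_cycle_sum) (simp add: thetaG_def inv_arcs_def arcs_between_def)
  also have "\<dots> = cycle_sum A (\<lambda>a a'. \<Sum>t\<in>UNIV. P a t * Q t a') m"
    by (rule cycle_sum_cong) (simp add: thetaG_factor)
  also have "\<dots> = cycle_sum UNIV (\<lambda>s t. \<Sum>a\<in>A. Q s a * P a t) m"
    using assms by (rule cycle_sum_factor_commute)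
  also have "(\<lambda>s t. \<Sum>a\<in>A. Q s a * P a t) = (\<lambda>s t. transfer_mat $ s $ t)"
  proof (intro ext)
    fix s t :: "'v \<times> 'v"
    have "A \<inter> {a. t = (tail a, head a)} = arcs_between A tail head (fst t) (snd t)"
      by (auto simp: arcs_between_def)
    then have "(\<Sum>a\<in>A. Q s a * P a t) = (\<Sum>a\<in>arcs_between A tail head (fst t) (snd t).
        if fst t = snd s then \<tau> a - (if snd t = fst s then \<upsilon> a else 0) else 0)"
      using assms(1) by (simp add: P_def) (intro sum.cong refl, auto simp: Q_def arcs_between_def)
    then show "(\<Sum>a\<in>A. Q s a * P a t) = transfer_mat $ s $ t"
      by (simp add: transfer_mat_def a_coef_def sum_subtractf prod.swap_def prod_eq_iff)
  qed
  finally show ?thesis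
    using assms(2) by (simp add: cycle_sum_UNIV_eq_trace)
qed

definition log_zeta :: "'r fps" where
  "log_zeta = Abs_fps (\<lambda>m. if m = 0 then 0
     else rinv (of_nat m) * N_paths A tail head (thetaG A tail head \<tau> \<upsilon>) m)"

lemma zeta_thetaG_eq: "zeta A tail head (thetaG A tail head \<tau> \<upsilon>) = fps_exp_R log_zeta"
  by (simp add: zeta_def log_zeta_def)

lemma X_deriv_log_zeta:
  assumes Qalg: "\<And>n::nat. n > 0 \<Longrightarrow> \<exists>y::'r. of_nat n * y = 1" and "finite A"
  shows "fps_X * fps_deriv log_zeta = trace (matpow_series transfer_mat) - of_nat CARD('v \<times> 'v)"
proof (rule fps_ext)
  fix m
  show "fps_nth (fps_X * fps_deriv log_zeta) m
      = fps_nth (trace (matpow_series transfer_mat) - of_nat CARD('v \<times> 'v)) m"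
  proof (cases "m = 0")
    case True
    then show ?thesis by (simp add: fps_nth_trace_matpow_series trace_I)
  next
    case False
    then show ?thesis
      using of_nat_mult_rinv[OF Qalg, of m] N_paths_thetaG[OF \<open>finite A\<close>, of m]
      by (simp add: log_zeta_def fps_mult_fps_X_deriv_shift fps_nth_trace_matpow_series
          mult.assoc[symmetric])
  qed
qed

abbreviation fpair :: "'v \<times> 'v \<Rightarrow> 'r fps" where
  "fpair p \<equiv> f_pair A tail head \<upsilon> (fst p) (snd p)"

abbreviation \<phi> :: "'v \<times> 'v \<Rightarrow> 'r fps" where
  "\<phi> p \<equiv> finv (fpair p)"

lemma fpair_nonloop:
  "fst p \<noteq> snd p \<Longrightarrow> fpair p = 1 - fps_const (\<beta> p * \<beta> (prod.swap p)) * fps_X ^ 2"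
  by (simp add: f_pair_def a_coef_def)

lemma f_pair_commute: "f_pair A tail head \<upsilon> v u = f_pair A tail head \<upsilon> u v"
  by (cases "u = v") (simp_all add: f_pair_def mult.commute)

lemma fps_nth_fpair_0: "fps_nth (fpair p) 0 = 1"
  by (simp add: f_pair_def)

lemma fpair_mult_inv: "fpair p * \<phi> p = 1"
  by (rule fps_mult_finv[OF fps_nth_fpair_0])

(* K = I + t J, where J joins each pair to its reverse with weight beta. K is block diagonal, with
   the block 1 + t beta (u, u) at a loop pair and a 2x2 block of determinant f_pair u v on
   {(u, v), (v, u)}; inverting the blocks gives swap_mat_inv. *)
definition swap_mat :: "'r fps^('v \<times> 'v)^('v \<times> 'v)" where
  "swap_mat = (\<chi> p q. of_bool (q = p) + of_bool (q = prod.swap p) * fps_X * fps_const (\<beta> q))"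

definition swap_mat_inv :: "'r fps^('v \<times> 'v)^('v \<times> 'v)" where
  "swap_mat_inv = (\<chi> p q. of_bool (q = p) * \<phi> p
     - of_bool (q = prod.swap p \<and> q \<noteq> p) * fps_X * fps_const (\<beta> q) * \<phi> p)"

lemma swap_mat_mult_nth:
  "(swap_mat ** M) $ p $ q = M $ p $ q + fps_X * fps_const (\<beta> (prod.swap p)) * M $ prod.swap p $ q"
  by (simp add: swap_mat_def matrix_matrix_mult_def distrib_right sum.distrib mult.assoc)

lemma mult_swap_mat_nth:
  "(M ** swap_mat) $ p $ q = M $ p $ q + M $ p $ prod.swap q * (fps_X * fps_const (\<beta> q))"
proof -
  have "q = prod.swap z \<longleftrightarrow> z = prod.swap q" for z by auto
  then show ?thesis
    by (simp add: swap_mat_def matrix_matrix_mult_def distrib_left sum.distrib mult.assoc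
        mult.left_commute[of _ "of_bool _"])
qed

lemma swap_mat_inverse_right: "swap_mat ** swap_mat_inv = mat 1"
proof -
  have "(swap_mat ** swap_mat_inv) $ p $ q = mat 1 $ p $ q" for p q
  proof (cases "fst p = snd p")
    case True
    then obtain u where p: "p = (u, u)" by (cases p) auto
    then have "(swap_mat ** swap_mat_inv) $ p $ q = fpair p * swap_mat_inv $ p $ q"
      by (simp add: swap_mat_mult_nth f_pair_def a_coef_def algebra_simps)
    then show ?thesis
      using fpair_mult_inv[of p] by (auto simp: swap_mat_inv_def mat_def p)
  next
    case False
    then have "prod.swap p \<noteq> p" by (simp add: prod_eq_iff)
    then show ?thesis
      using False fpair_mult_inv[of p]
      by (auto simp: swap_mat_mult_nth swap_mat_inv_def mat_def fpair_nonloop f_pair_commute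
          algebra_simps power2_eq_square simp flip: fps_const_mult)
  qed
  then show ?thesis by (simp add: vec_eq_iff)
qed

lemma swap_mat_inverse_left: "swap_mat_inv ** swap_mat = mat 1"
proof -
  have "(swap_mat_inv ** swap_mat) $ p $ q = mat 1 $ p $ q" for p q
  proof (cases "fst q = snd q")
    case True
    then obtain u where q: "q = (u, u)" by (cases q) auto
    then have "(swap_mat_inv ** swap_mat) $ p $ q = swap_mat_inv $ p $ q * fpair q"
      by (simp add: mult_swap_mat_nth f_pair_def a_coef_def algebra_simps)
    then show ?thesis
      using fpair_mult_inv[of q] by (auto simp: swap_mat_inv_def mat_def q mult.commute prod_eq_iff)
  next
    case False
    then have "prod.swap q \<noteq> q" by (simp add: prod_eq_iff)
    then show ?thesis
      using False fpair_mult_inv[of p]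
      by (auto simp: mult_swap_mat_nth swap_mat_inv_def mat_def fpair_nonloop f_pair_commute
          algebra_simps power2_eq_square inj_eq[OF inj_swap] simp flip: fps_const_mult)
  qed
  then show ?thesis by (simp add: vec_eq_iff)
qed

lemma X_deriv_swap_mat: "smult_mat fps_X (map_matrix fps_deriv swap_mat) = swap_mat - mat 1"
proof -
  have "fps_X * fps_deriv (swap_mat $ p $ q) = swap_mat $ p $ q - mat 1 $ p $ q" for p q
    by (cases "q = p"; cases "q = prod.swap p") (simp_all add: swap_mat_def mat_def)
  then show ?thesis by (simp add: vec_eq_iff)
qed

lemma trace_swap_mat_inv: "trace swap_mat_inv = (\<Sum>p\<in>UNIV. \<phi> p)"
  by (simp add: trace_def swap_mat_inv_def)

definition head_mat :: "'r fps^'v^('v \<times> 'v)" where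
  "head_mat = (\<chi> p w. of_bool (snd p = w))"

definition tail_mat :: "'r fps^('v \<times> 'v)^'v" where
  "tail_mat = (\<chi> w p. of_bool (fst p = w) * fps_const (\<alpha> p))"

lemma transfer_mat_decompose:
  "mat 1 - smult_mat fps_X (map_matrix fps_const transfer_mat)
     = swap_mat - smult_mat fps_X (head_mat ** tail_mat)"
proof -
  have "(head_mat ** tail_mat) $ p $ q = of_bool (snd p = fst q) * fps_const (\<alpha> q)" for p q
    by (simp add: head_mat_def tail_mat_def matrix_matrix_mult_def)
  moreover have "mat 1 $ p $ q - fps_X * fps_const (transfer_mat $ p $ q)
      = swap_mat $ p $ q - fps_X * (of_bool (snd p = fst q) * fps_const (\<alpha> q))" for p q
    by (cases "snd p = fst q"; cases "q = prod.swap p")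
      (simp_all add: mat_def swap_mat_def transfer_mat_def algebra_simps)
  ultimately show ?thesis by (simp add: vec_eq_iff)
qed

lemma tail_mat_mult_nth: "(tail_mat ** M) $ w $ x = (\<Sum>v\<in>UNIV. fps_const (\<alpha> (w, v)) * M $ (w, v) $ x)"
proof -
  have "(tail_mat ** M) $ w $ x = (\<Sum>p\<in>{p. fst p = w}. fps_const (\<alpha> p) * M $ p $ x)"
    by (simp add: tail_mat_def matrix_matrix_mult_def mult.assoc)
  also have "{p. fst p = w} = range (Pair w)"
    by auto
  finally show ?thesis
    by (simp add: sum.reindex inj_on_def)
qed

lemma swap_mat_inv_mult_head_mat_nth:
  "(swap_mat_inv ** head_mat) $ p $ x = of_bool (snd p = x) * \<phi> p
     - of_bool (fst p = x \<and> fst p \<noteq> snd p) * fps_X * fps_const (\<beta> (prod.swap p)) * \<phi> p"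
proof -
  have "q = prod.swap p \<and> q \<noteq> p \<longleftrightarrow> q = prod.swap p \<and> fst p \<noteq> snd p" for q
    by (auto simp: prod_eq_iff)
  then show ?thesis
    by (simp add: swap_mat_inv_def head_mat_def matrix_matrix_mult_def left_diff_distrib
        sum_subtractf mult.assoc)
qed

lemma tail_mat_swap_mat_inv_head_mat_nth:
  "(tail_mat ** swap_mat_inv ** head_mat) $ w $ x = fps_const (\<alpha> (w, x)) * \<phi> (w, x)
     - of_bool (w = x) * fps_X * (\<Sum>v\<in>{v. v \<noteq> w}. \<phi> (w, v) * fps_const (\<alpha> (w, v) * \<beta> (v, w)))"
  unfolding matrix_mul_assoc[symmetric] tail_mat_mult_nth swap_mat_inv_mult_head_mat_nth
  by (cases "w = x") (simp_all add: right_diff_distrib sum_subtractf mult_ac eq_commute flip: sum_distrib_left)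

definition vertex_mat :: "'r fps^'v^'v" where
  "vertex_mat = mat 1 - smult_mat fps_X (tail_mat ** swap_mat_inv ** head_mat)"

lemma X_deriv_det_vertex_mat:
  "fps_X * fps_deriv (det vertex_mat)
     = det vertex_mat * (trace swap_mat_inv - trace (matpow_series transfer_mat))"
proof -
  let ?G = "matpow_series transfer_mat"
  let ?Z = "mat 1 + smult_mat fps_X (tail_mat ** ?G ** head_mat)"
  have G_L: "?G ** (swap_mat - smult_mat fps_X (head_mat ** tail_mat)) = mat 1"
    unfolding transfer_mat_decompose[symmetric] by (rule matpow_series_mult_left)
  have L_G: "(swap_mat - smult_mat fps_X (head_mat ** tail_mat)) ** ?G = mat 1"
    unfolding transfer_mat_decompose[symmetric] by (rule matpow_series_mult_right)
  have deriv_det: "fps_deriv (det vertex_mat) = det vertex_mat * trace (map_matrix fps_deriv vertex_mat ** ?Z)"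
    unfolding vertex_mat_def
    by (rule fps_deriv_det, rule woodbury_left_inverse[OF swap_mat_inverse_right G_L])
  have X_trace: "fps_X * trace (map_matrix fps_deriv vertex_mat ** ?Z)
      = trace swap_mat_inv - trace ?G"
    unfolding vertex_mat_def
    by (rule woodbury_trace_deriv[OF swap_mat_inverse_left swap_mat_inverse_right G_L L_G _ _
          X_deriv_swap_mat]) (simp_all add: vec_eq_iff head_mat_def tail_mat_def)
  show ?thesis
    by (simp only: deriv_det mult.left_commute[of fps_X] X_trace)
qed

lemma fps_nth_det_vertex_mat_0: "fps_nth (det vertex_mat) 0 = 1"
proof -
  have "map_matrix (\<lambda>f. fps_nth f 0) vertex_mat = mat 1"
    by (simp add: vec_eq_iff vertex_mat_def mat_def)
  then show ?thesis by (simp add: fps_nth_det_0 det_I)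
qed

end

section \<open>The factor \<open>f_Delta\<close> and the matrices \<open>A_mat\<close> and \<open>D_mat\<close>\<close>

lemma sum_pairs_le_symmetric:
  fixes h :: "'v::{finite,linorder} \<times> 'v \<Rightarrow> 'a::comm_semiring_1"
  assumes "\<And>p. h (prod.swap p) = h p"
  shows "(\<Sum>p\<in>{p. fst p \<le> snd p}. (if fst p = snd p then 1 else 2) * h p) = (\<Sum>p\<in>UNIV. h p)"
proof -
  let ?D = "{p :: 'v \<times> 'v. fst p = snd p}" and ?L = "{p :: 'v \<times> 'v. fst p < snd p}"
  have "{p. fst p \<le> snd p} = ?D \<union> ?L" by auto
  then have "(\<Sum>p\<in>{p. fst p \<le> snd p}. (if fst p = snd p then 1 else 2) * h p)
      = (\<Sum>p\<in>?D. (if fst p = snd p then 1 else 2) * h p)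
        + (\<Sum>p\<in>?L. (if fst p = snd p then 1 else 2) * h p)"
    by (simp add: sum.union_disjoint disjoint_iff)
  also have "\<dots> = sum h ?D + 2 * sum h ?L"
    unfolding sum_distrib_left by (intro arg_cong2[where f = "(+)"] sum.cong) auto
  also have "2 * sum h ?L = sum h ?L + sum h (prod.swap ` ?L)"
    by (simp add: mult_2 sum.reindex assms)
  also have "sum h ?D + (sum h ?L + sum h (prod.swap ` ?L)) = sum h (?D \<union> ?L \<union> prod.swap ` ?L)"
  proof -
    have "?D \<inter> ?L = {}" and "(?D \<union> ?L) \<inter> prod.swap ` ?L = {}" by auto
    then show ?thesis by (simp add: sum.union_disjoint add.assoc)
  qed
  also have "?D \<union> ?L \<union> prod.swap ` ?L = UNIV"
    by (auto simp: image_iff)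
  finally show ?thesis .
qed

lemma sum_pairs_less_incident:
  fixes H :: "'v::{finite,linorder} \<times> 'v \<Rightarrow> 'a::comm_monoid_add"
  shows "(\<Sum>p\<in>{p. fst p < snd p}. (if fst p = w then H p else 0) + (if snd p = w then H (prod.swap p) else 0))
       = (\<Sum>v\<in>{v. v \<noteq> w}. H (w, v))"
proof -
  let ?L = "{p :: 'v \<times> 'v. fst p < snd p}"
  have "(\<Sum>p\<in>?L. if fst p = w then H p else 0) = (\<Sum>p\<in>(\<lambda>v. (w, v)) ` {v. w < v}. H p)"
    by (rule sum.mono_neutral_cong_right) auto
  also have "\<dots> = (\<Sum>v\<in>{v. w < v}. H (w, v))"
    by (simp add: sum.reindex inj_on_def)
  finally have upper: "(\<Sum>p\<in>?L. if fst p = w then H p else 0) = (\<Sum>v\<in>{v. w < v}. H (w, v))" .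
  have "(\<Sum>p\<in>?L. if snd p = w then H (prod.swap p) else 0) = (\<Sum>p\<in>(\<lambda>u. (u, w)) ` {u. u < w}. H (prod.swap p))"
    by (rule sum.mono_neutral_cong_right) auto
  also have "\<dots> = (\<Sum>u\<in>{u. u < w}. H (w, u))"
    by (simp add: sum.reindex inj_on_def)
  finally have lower: "(\<Sum>p\<in>?L. if snd p = w then H (prod.swap p) else 0) = (\<Sum>u\<in>{u. u < w}. H (w, u))" .
  have "{v. v \<noteq> w} = {v. w < v} \<union> {v. v < w}" and "{v. w < v} \<inter> {v. v < w} = {}"
    by auto
  then show ?thesis
    by (simp add: sum.distrib upper lower sum.union_disjoint)
qed

locale ordered_arc_weights = arc_weights A tail head \<tau> \<upsilon>
  for A :: "'e set" and tail head :: "'e \<Rightarrow> 'v::{finite,linorder}" and \<tau> \<upsilon> :: "'e \<Rightarrow> 'r::comm_ring_1"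
begin

lemma f_Delta_eq: "f_Delta A tail head \<upsilon> = (\<Prod>p\<in>{p. fst p \<le> snd p}. fpair p)"
  unfolding f_Delta_def case_prod_beta'
proof (rule prod.mono_neutral_left)
  show "\<forall>p\<in>{p. fst p \<le> snd p} - Phi A tail head. fpair p = 1"
    by (auto simp: Phi_def f_pair_def a_coef_def)
qed (auto simp: Phi_def)

lemma fps_nth_f_Delta_0: "fps_nth (f_Delta A tail head \<upsilon>) 0 = 1"
  by (simp add: f_Delta_eq fps_nth_prod_0 fps_nth_fpair_0)

lemma X_deriv_fpair:
  "fps_X * fps_deriv (fpair p) * \<phi> p = (if fst p = snd p then 1 else 2) * (1 - \<phi> p)"
proof -
  define c :: "'r fps" where "c = (if fst p = snd p then 1 else 2)"
  have X_deriv: "fps_X * fps_deriv (fpair p) = c * (fpair p - 1)"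
    by (simp add: c_def f_pair_def fps_deriv_power algebra_simps power2_eq_square numeral_fps_const)
  have "fps_X * fps_deriv (fpair p) * \<phi> p = c * (fpair p - 1) * \<phi> p"
    by (simp only: X_deriv)
  also have "\<dots> = c * (fpair p * \<phi> p - \<phi> p)"
    by (simp add: algebra_simps)
  finally show ?thesis
    by (simp add: c_def fpair_mult_inv)
qed

lemma X_deriv_f_Delta:
  "fps_X * fps_deriv (f_Delta A tail head \<upsilon>)
     = f_Delta A tail head \<upsilon> * (of_nat CARD('v \<times> 'v) - trace swap_mat_inv)"
proof -
  let ?U = "{p :: 'v \<times> 'v. fst p \<le> snd p}"
  have "fps_deriv (\<Prod>p\<in>?U. fpair p) = (\<Prod>p\<in>?U. fpair p) * (\<Sum>p\<in>?U. fps_deriv (fpair p) * \<phi> p)"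
    by (rule fps_deriv_prod_units) (simp_all add: fpair_mult_inv)
  then have "fps_X * fps_deriv (f_Delta A tail head \<upsilon>)
      = f_Delta A tail head \<upsilon> * (\<Sum>p\<in>?U. fps_X * fps_deriv (fpair p) * \<phi> p)"
    by (simp add: f_Delta_eq sum_distrib_left mult_ac)
  also have "(\<Sum>p\<in>?U. fps_X * fps_deriv (fpair p) * \<phi> p) = (\<Sum>p\<in>UNIV. 1 - \<phi> p)"
    unfolding X_deriv_fpair by (rule sum_pairs_le_symmetric) (simp add: f_pair_commute)
  finally show ?thesis
    by (simp add: sum_subtractf trace_swap_mat_inv)
qed

lemma D_mat_diag:
  "D_mat A tail head \<tau> \<upsilon> $ w $ w
     = (\<Sum>v\<in>{v. v \<noteq> w}. \<phi> (w, v) * fps_const (\<alpha> (w, v) * \<beta> (v, w)))"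
proof -
  define H where "H p = \<phi> p * fps_const (\<alpha> p * \<beta> (prod.swap p))" for p
  let ?h = "\<lambda>p. (if fst p = w then H p else 0) + (if snd p = w then H (prod.swap p) else 0)"
  let ?d = "d_coef A tail head \<tau> \<upsilon>"
  have d: "?d u v = \<alpha> (u, v) * \<beta> (v, u)" for u v
    by (simp add: d_coef_def a_coef_def sum_product)
  have "D_mat A tail head \<tau> \<upsilon> $ w $ w = (\<Sum>p\<in>Phi3 A tail head. \<phi> p
      * fps_const ((if w = fst p then ?d (fst p) (snd p) else 0) + (if w = snd p then ?d (snd p) (fst p) else 0)))"
    by (simp add: D_mat_def case_prod_beta')
  also have "\<dots> = (\<Sum>p\<in>Phi3 A tail head. ?h p)"
    by (rule sum.cong) (auto simp: Phi3_def H_def d f_pair_commute distrib_left)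
  also have "\<dots> = (\<Sum>p\<in>{p. fst p < snd p}. ?h p)"
    by (rule sum.mono_neutral_left) (auto simp: Phi3_def Phi_def H_def a_coef_def)
  also have "\<dots> = (\<Sum>v\<in>{v. v \<noteq> w}. H (w, v))"
    by (rule sum_pairs_less_incident)
  finally show ?thesis by (simp add: H_def)
qed

lemma vertex_mat_eq:
  "(\<chi> w w'. (if w = w' then 1 else 0) - fps_X * A_mat A tail head \<tau> \<upsilon> $ w $ w'
      + fps_X ^ 2 * D_mat A tail head \<tau> \<upsilon> $ w $ w') = vertex_mat"
  by (auto simp: vertex_mat_def vec_eq_iff tail_mat_swap_mat_inv_head_mat_nth D_mat_diag A_mat_def
      mat_def algebra_simps power2_eq_square) (simp add: D_mat_def)

end

theorem mainTheorem1:
  fixes A :: "'e set" and tail head :: "'e \<Rightarrow> 'v::{finite,linorder}"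
    and \<tau> \<upsilon> :: "'e \<Rightarrow> 'r::comm_ring_1"
  assumes Qalg: "\<And>n::nat. n > 0 \<Longrightarrow> \<exists>y::'r. of_nat n * y = 1"
    and finA: "finite A"
  shows "finv (zeta A tail head (thetaG A tail head \<tau> \<upsilon>)) =
     f_Delta A tail head \<upsilon> *
     det (\<chi> w w'. (if w = w' then 1 else 0) - fps_X * A_mat A tail head \<tau> \<upsilon> $ w $ w'
                   + fps_X ^ 2 * D_mat A tail head \<tau> \<upsilon> $ w $ w')"
proof -
  interpret ordered_arc_weights A tail head \<tau> \<upsilon> .
  let ?f = "f_Delta A tail head \<upsilon>" and ?D = "det vertex_mat"
  have "fps_X * (fps_deriv (?f * ?D) + ?f * ?D * fps_deriv log_zeta)
      = ?D * (fps_X * fps_deriv ?f) + ?f * (fps_X * fps_deriv ?D) + ?f * ?D * (fps_X * fps_deriv log_zeta)"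
    by (simp add: algebra_simps)
  also have "\<dots> = ?D * (?f * (of_nat CARD('v \<times> 'v) - trace swap_mat_inv))
      + ?f * (?D * (trace swap_mat_inv - trace (matpow_series transfer_mat)))
      + ?f * ?D * (trace (matpow_series transfer_mat) - of_nat CARD('v \<times> 'v))"
    by (simp only: X_deriv_f_Delta X_deriv_det_vertex_mat X_deriv_log_zeta[OF Qalg finA])
  also have "\<dots> = 0"
    by (simp add: algebra_simps)
  finally have "fps_deriv (?f * ?D) + ?f * ?D * fps_deriv log_zeta = 0"
    using fps_mult_fps_X_nonzero(1) by blast
  then have "finv (fps_exp_R log_zeta) = ?f * ?D"
    by (intro finv_fps_exp_R_eqI[OF Qalg])
      (simp_all add: log_zeta_def fps_nth_f_Delta_0 fps_nth_det_vertex_mat_0)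
  then show ?thesis
    by (simp only: zeta_thetaG_eq vertex_mat_eq)
qed

end
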